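(* Let $f$ be a frog model statistic with values in $[0,\infty]$. Suppose that for some nonroot vertex $v$ and all frog models $(\eta,S)$, $$f(\eta,S)=\sum_{i=1}^{\eta(v)}f\bigl(\sigma_{S_\cdot(v,i)}(\kappa_v(\eta,S))\bigr).$$ Then for all $(\eta,S)$ and all paths $P^1_\cdot,\dots,P^m_\cdot$ starting at $v$: (i) for every $m\geq1$, $(-1)^m\Delta_{P^1_\cdot}\cdots\Delta_{P^m_\cdot}f(\eta,S)\le0$ whenever all values $f(\sigma_{P^{u_1}_\cdot}\cdots\sigma_{P^{u_j}_\cdot}(\eta,S))$, $\{u_1,\dots,u_j\}\subseteq\{1,\dots,m\}$, are finite; (ii) if $f(\eta,S)=\infty$ then $f(\sigma_{P^1_\cdot}(\eta,S))=\infty$; (iii) if $f(\sigma_{P^1_\cdot}\sigma_{P^2_\cdot}(\eta,S))=\infty$ then $f(\sigma_{P^i_\cdot}(\eta,S))=\infty$ for $i=1$ or $i=2$.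
   Context: Frog model: $G$ countable with root $\emptyset$; $(\eta,S)$ consists of counts $\eta(v)\in\{0,1,\dots\}$ for $v\ne\emptyset$ and paths $S_\cdot(v,i)$ with $S_0(v,i)=v$; one active frog starts at $\emptyset$; sleeping frogs activate when an active frog visits their vertex, then follow their paths. $\kappa_v(\eta,S)$: delete all frogs at $v$. $\sigma_{P_\cdot}(\eta,S)$: add one extra frog with path $P_\cdot$ at $P_0$. $\Delta_{P_\cdot}f(\eta,S)=f(\sigma_{P_\cdot}(\eta,S))-f(\eta,S)$. *)

theory Defs
  imports "HOL-Analysis.Analysis" "HOL-Library.Sublist"
begin

type_synonym 'v path = "nat \<Rightarrow> 'v"
type_synonym 'v frogs = "('v \<Rightarrow> nat) \<times> ('v \<Rightarrow> nat \<Rightarrow> 'v path)"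

definition is_path :: "('v \<Rightarrow> 'v \<Rightarrow> bool) \<Rightarrow> 'v path \<Rightarrow> bool" where
  "is_path E P \<longleftrightarrow> (\<forall>n. E (P n) (P (Suc n)))"

text \<open>Convention: eta r = 1 and S r 1 is the path of the
  initially active frog at the root r; for other v, frogs are indexed 1..eta v.
  Unused slots are set to the constant path, so a frog model is determined by its
  actual frogs.\<close>
definition valid_fm :: "('v \<Rightarrow> 'v \<Rightarrow> bool) \<Rightarrow> 'v \<Rightarrow> 'v frogs \<Rightarrow> bool" where
  "valid_fm E r x \<longleftrightarrow>
     fst x r = 1 \<and>
     (\<forall>u i. 1 \<le> i \<and> i \<le> fst x u \<longrightarrow> snd x u i 0 = u \<and> is_path E (snd x u i)) \<and>
     (\<forall>u i. (i = 0 \<or> fst x u < i) \<longrightarrow> snd x u i = (\<lambda>_. u))"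

definition kappa :: "'v \<Rightarrow> 'v frogs \<Rightarrow> 'v frogs" where
  "kappa v x = ((fst x)(v := 0), (snd x)(v := (\<lambda>i _. v)))"

definition sigma :: "'v path \<Rightarrow> 'v frogs \<Rightarrow> 'v frogs" where
  "sigma P x = (let u = P 0; n = fst x u in
     ((fst x)(u := Suc n), (snd x)(u := (snd x u)(Suc n := P))))"

fun Delta :: "'v path list \<Rightarrow> ('v frogs \<Rightarrow> real) \<Rightarrow> 'v frogs \<Rightarrow> real" where
  "Delta [] g x = g x"
| "Delta (P # Ps) g x = Delta Ps g (sigma P x) - Delta Ps g x"

text \<open>sigma_seq [Q1,...,Qj] x applies sigma_Q1 first, then Q2, ... (the order in
  which the points appear in the expansion of Delta).\<close>
definition sigma_seq :: "'v path list \<Rightarrow> 'v frogs \<Rightarrow> 'v frogs" where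
  "sigma_seq Qs x = foldl (\<lambda>y Q. sigma Q y) x Qs"

end

theory Submission
  imports Defs
begin

text \<open>Adding a frog at v adds the summand f(\<sigma>_P(\<kappa>_v x)) to f x. Since \<kappa>_v ignores
  the frogs at v, this increment is unchanged by adding further frogs at v, so every
  difference of order at least two vanishes, and the first difference is nonnegative.
  The infinite cases follow from the same additive identity in [0,\<infinity>].\<close>

lemma kappa_sigma: "P 0 = v \<Longrightarrow> kappa v (sigma P x) = kappa v x"
  by (auto simp: kappa_def sigma_def Let_def)

lemma sigma_seq_Cons: "sigma_seq (P # Qs) x = sigma_seq Qs (sigma P x)"
  by (simp add: sigma_seq_def)

lemma valid_fm_sigma:
  assumes "valid_fm E r x" "P 0 = v" "is_path E P" "v \<noteq> r"
  shows "valid_fm E r (sigma P x)"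
  using assms unfolding valid_fm_def sigma_def Let_def
  by (auto simp: le_Suc_eq)

locale frog_sum_at =
  fixes E :: "'v \<Rightarrow> 'v \<Rightarrow> bool" and r v :: 'v and f :: "'v frogs \<Rightarrow> ennreal"
  assumes v_ne_r: "v \<noteq> r"
    and f_sum: "\<forall>x. valid_fm E r x \<longrightarrow>
                 f x = (\<Sum>i = 1..fst x v. f (sigma (snd x v i) (kappa v x)))"
begin

definition paths_at_v :: "'v path list \<Rightarrow> bool" where
  "paths_at_v Ps \<longleftrightarrow> (\<forall>P\<in>set Ps. P 0 = v \<and> is_path E P)"

definition finite_on_subseqs :: "'v path list \<Rightarrow> 'v frogs \<Rightarrow> bool" where
  "finite_on_subseqs Ps x \<longleftrightarrow> (\<forall>Qs. subseq Qs Ps \<longrightarrow> f (sigma_seq Qs x) \<noteq> \<infinity>)"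

lemma finite_on_subseqs_sigma:
  assumes "finite_on_subseqs (P # Ps) x"
  shows "finite_on_subseqs Ps (sigma P x)"
  unfolding finite_on_subseqs_def
proof (intro allI impI)
  fix Qs
  assume "subseq Qs Ps"
  then have "subseq (P # Qs) (P # Ps)"
    by simp
  then have "f (sigma_seq (P # Qs) x) \<noteq> \<infinity>"
    using assms unfolding finite_on_subseqs_def by blast
  then show "f (sigma_seq Qs (sigma P x)) \<noteq> \<infinity>"
    by (simp add: sigma_seq_Cons)
qed

lemma finite_on_subseqs_Cons:
  assumes "finite_on_subseqs (P # Ps) x"
  shows "finite_on_subseqs Ps x"
  unfolding finite_on_subseqs_def
proof (intro allI impI)
  fix Qs
  assume "subseq Qs Ps"
  then have "subseq Qs (P # Ps)"
    by (rule list_emb_Cons)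
  then show "f (sigma_seq Qs x) \<noteq> \<infinity>"
    using assms unfolding finite_on_subseqs_def by blast
qed

lemma f_sigma:
  assumes x: "valid_fm E r x" and P: "P 0 = v" "is_path E P"
  shows "f (sigma P x) = f x + f (sigma P (kappa v x))"
proof -
  let ?n = "fst x v" and ?S = "snd (sigma P x) v"
  have n: "fst (sigma P x) v = Suc ?n"
    using P by (simp add: sigma_def Let_def)
  have "f (sigma P x) = (\<Sum>i = 1..fst (sigma P x) v. f (sigma (?S i) (kappa v (sigma P x))))"
    by (rule f_sum[rule_format, OF valid_fm_sigma[OF x P v_ne_r]])
  also have "\<dots> = (\<Sum>i = 1..Suc ?n. f (sigma (?S i) (kappa v x)))"
    unfolding n kappa_sigma[of P v, OF P(1)] ..
  also have "\<dots> = (\<Sum>i = 1..?n. f (sigma (?S i) (kappa v x))) + f (sigma (?S (Suc ?n)) (kappa v x))"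
    by (simp add: sum.cl_ivl_Suc)
  also have "(\<Sum>i = 1..?n. f (sigma (?S i) (kappa v x))) = (\<Sum>i = 1..?n. f (sigma (snd x v i) (kappa v x)))"
    by (rule sum.cong) (auto simp: sigma_def Let_def P)
  also have "\<dots> = f x"
    by (rule f_sum[rule_format, OF x, symmetric])
  also have "?S (Suc ?n) = P"
    using P by (simp add: sigma_def Let_def)
  finally show ?thesis .
qed

lemma f_sigma_eq_top:
  "\<lbrakk>valid_fm E r x; P 0 = v; is_path E P; f x = \<infinity>\<rbrakk> \<Longrightarrow> f (sigma P x) = \<infinity>"
  by (simp add: f_sigma)

lemma f_sigma_sigma_eq_top:
  assumes x: "valid_fm E r x" and P1: "P1 0 = v" "is_path E P1" and P2: "P2 0 = v" "is_path E P2"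
    and top: "f (sigma P1 (sigma P2 x)) = \<infinity>"
  shows "f (sigma P1 x) = \<infinity> \<or> f (sigma P2 x) = \<infinity>"
proof -
  have "f x + f (sigma P2 (kappa v x)) + f (sigma P1 (kappa v x)) = \<infinity>"
    using top f_sigma[OF valid_fm_sigma[OF x P2 v_ne_r] P1] f_sigma[OF x P2]
      kappa_sigma[of P2 v, OF P2(1)]
    by simp
  then show ?thesis
    using top f_sigma[OF x P1] f_sigma[OF x P2] by (auto simp: ennreal_add_eq_top)
qed

lemma Delta_single:
  assumes x: "valid_fm E r x" and P: "P 0 = v" "is_path E P"
    and fin: "f x \<noteq> \<infinity>" "f (sigma P x) \<noteq> \<infinity>"
  shows "Delta [P] (\<lambda>y. enn2real (f y)) x = enn2real (f (sigma P (kappa v x)))"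
proof -
  have "f (sigma P (kappa v x)) \<noteq> \<infinity>"
    using fin f_sigma[OF x P] by auto
  then show ?thesis
    using fin f_sigma[OF x P] by (simp add: enn2real_plus top.not_eq_extremum)
qed

lemma Delta_single_finite:
  "\<lbrakk>valid_fm E r x; paths_at_v [P]; finite_on_subseqs [P] x\<rbrakk>
    \<Longrightarrow> Delta [P] (\<lambda>y. enn2real (f y)) x = enn2real (f (sigma P (kappa v x)))"
  unfolding paths_at_v_def finite_on_subseqs_def
  by (rule Delta_single) (auto dest: spec[of _ "[]"] spec[of _ "[P]"] simp: sigma_seq_def)

lemma Delta_higher_order_eq_0:
  "\<lbrakk>valid_fm E r x; paths_at_v (P # Q # Ps); finite_on_subseqs (P # Q # Ps) x\<rbrakk>
    \<Longrightarrow> Delta (P # Q # Ps) (\<lambda>y. enn2real (f y)) x = 0"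
proof (induction Ps arbitrary: P Q x)
  case Nil
  have P: "P 0 = v" "is_path E P" and Q: "paths_at_v [Q]"
    using Nil.prems(2) by (auto simp: paths_at_v_def)
  have "Delta [Q] (\<lambda>y. enn2real (f y)) (sigma P x) = Delta [Q] (\<lambda>y. enn2real (f y)) x"
    using Delta_single_finite[OF valid_fm_sigma[OF Nil.prems(1) P v_ne_r] Q
        finite_on_subseqs_sigma[OF Nil.prems(3)]]
      Delta_single_finite[OF Nil.prems(1) Q finite_on_subseqs_Cons[OF Nil.prems(3)]]
      kappa_sigma[of P v, OF P(1)]
    by simp
  then show ?case by simp
next
  case (Cons R Ps)
  have P: "P 0 = v" "is_path E P" and QRPs: "paths_at_v (Q # R # Ps)"
    using Cons.prems(2) by (auto simp: paths_at_v_def)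
  show ?case
    using Cons.IH[OF valid_fm_sigma[OF Cons.prems(1) P v_ne_r] QRPs
        finite_on_subseqs_sigma[OF Cons.prems(3)]]
      Cons.IH[OF Cons.prems(1) QRPs finite_on_subseqs_Cons[OF Cons.prems(3)]]
    by simp
qed

lemma Delta_alternating_sign:
  assumes "valid_fm E r x" "Ps \<noteq> []" "paths_at_v Ps" "finite_on_subseqs Ps x"
  shows "(-1) ^ length Ps * Delta Ps (\<lambda>y. enn2real (f y)) x \<le> 0"
proof -
  obtain P Qs where Ps: "Ps = P # Qs"
    using assms(2) by (cases Ps) auto
  show ?thesis
  proof (cases Qs)
    case Nil
    then show ?thesis
      using Delta_single_finite assms Ps by simp
  next
    case (Cons Q Rs)
    then show ?thesis
      using Delta_higher_order_eq_0 assms Ps by simp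
  qed
qed

end

theorem lemma19:
  fixes E :: "'v::countable \<Rightarrow> 'v \<Rightarrow> bool" and r v :: 'v
    and f :: "'v frogs \<Rightarrow> ennreal"
  assumes symE: "\<forall>a b. E a b \<longleftrightarrow> E b a"
    and vr: "v \<noteq> r"
    and rec: "\<forall>x. valid_fm E r x \<longrightarrow>
                 f x = (\<Sum>i = 1..fst x v. f (sigma (snd x v i) (kappa v x)))"
  shows
    "(\<forall>x Ps. valid_fm E r x \<and> Ps \<noteq> [] \<and>
        (\<forall>P\<in>set Ps. P 0 = v \<and> is_path E P) \<and>
        (\<forall>Qs. subseq Qs Ps \<longrightarrow> f (sigma_seq Qs x) \<noteq> \<infinity>)
      \<longrightarrow> (-1) ^ length Ps * Delta Ps (\<lambda>y. enn2real (f y)) x \<le> 0)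
   \<and> (\<forall>x P. valid_fm E r x \<and> P 0 = v \<and> is_path E P \<and> f x = \<infinity>
      \<longrightarrow> f (sigma P x) = \<infinity>)
   \<and> (\<forall>x P1 P2. valid_fm E r x \<and> P1 0 = v \<and> is_path E P1 \<and> P2 0 = v \<and> is_path E P2
        \<and> f (sigma P1 (sigma P2 x)) = \<infinity>
      \<longrightarrow> f (sigma P1 x) = \<infinity> \<or> f (sigma P2 x) = \<infinity>)"
proof -
  interpret frog_sum_at E r v f
    using vr rec by unfold_locales
  show ?thesis
  proof (intro conjI allI impI)
    fix x Ps
    assume "valid_fm E r x \<and> Ps \<noteq> [] \<and> (\<forall>P\<in>set Ps. P 0 = v \<and> is_path E P) \<and>
        (\<forall>Qs. subseq Qs Ps \<longrightarrow> f (sigma_seq Qs x) \<noteq> \<infinity>)"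
    then show "(-1) ^ length Ps * Delta Ps (\<lambda>y. enn2real (f y)) x \<le> 0"
      by (intro Delta_alternating_sign) (auto simp: paths_at_v_def finite_on_subseqs_def)
  qed (use f_sigma_eq_top f_sigma_sigma_eq_top in blast)+
qed

end
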